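(* Let $U\in C([0,1])\cap C^1((0,1])\cap C^2((0,1))$ satisfy $U''>0$ on $(0,1)$, $\lim_{h\downarrow0}U'(h)=-\infty$, $r\mapsto rU''(r)$ non-decreasing on $(0,1)$, and $U(0)=U(1)=0$. Let $D>0$ and $R\in(1/2,1)$ satisfy $U'(R)-U'(1-R)=D$. Then the function $r\mapsto Dr-U(r)-U(1-r)$ is strictly increasing on $[0,R]$, and for every $r\in(0,R]$, \[-U(r)-U(1-r)\le -rU'(r)+r\sup_{\rho\in(0,R]}\big(U'(1-\rho)+\rho U''(\rho)\big).\] *)

theory Defs
  imports "HOL-Analysis.Analysis"
begin

end

theory Submission
  imports Defs
begin

text \<open>
  Since \<open>U''>0\<close>, \<open>U'\<close> is strictly increasing, so the derivative \<open>D - U' r + U' (1 - r)\<close>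
  of \<open>D r - U r - U (1 - r)\<close> is positive on \<open>(0,R)\<close>. For the inequality, the function
  \<open>h x = x U' x - U x - U (1 - x)\<close> has derivative \<open>U' (1 - x) + x U'' x\<close>, which is bounded by
  the supremum \<open>S\<close> (finite because \<open>\<rho> U'' \<rho>\<close> is monotone); hence \<open>h r \<le> h e + (r - e) S\<close>.
  As \<open>e \<rightarrow> 0\<close> we have \<open>U' e \<le> 0\<close> eventually, so \<open>h e \<le> - U e - U (1 - e) \<rightarrow> 0\<close>.
\<close>

lemma strict_mono_on_Icc_DERIV_pos:
  fixes f :: "real \<Rightarrow> real"
  assumes "continuous_on {a..b} f"
    and "\<And>x. a < x \<Longrightarrow> x < b \<Longrightarrow> \<exists>y. DERIV f x :> y \<and> y > 0"
  shows "strict_mono_on {a..b} f"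
proof (rule strict_mono_onI)
  fix x y assume xy: "x \<in> {a..b}" "y \<in> {a..b}" "x < y"
  show "f x < f y"
  proof (rule DERIV_pos_imp_increasing_open[OF \<open>x < y\<close>])
    show "continuous_on {x..y} f"
      using xy by (intro continuous_on_subset[OF assms(1)]) auto
    fix z assume "x < z" "z < y"
    then show "\<exists>d. DERIV f z :> d \<and> d > 0"
      using xy by (intro assms(2)) auto
  qed
qed

locale strictly_convex_unit_potential =
  fixes U U' U'' :: "real \<Rightarrow> real"
  assumes U_continuous: "continuous_on {0..1} U"
    and U_deriv: "\<forall>x\<in>{0<..1}. (U has_real_derivative U' x) (at x within {0<..1})"
    and U'_continuous: "continuous_on {0<..1} U'"
    and U'_deriv: "\<forall>x\<in>{0<..<1}. (U' has_real_derivative U'' x) (at x)"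
    and U''_pos: "\<forall>x\<in>{0<..<1}. U'' x > 0"
begin

lemma U_has_derivative_at:
  assumes "0 < x" "x < 1"
  shows "(U has_real_derivative U' x) (at x)"
proof -
  have "(U has_real_derivative U' x) (at x within {0<..<1})"
    using assms by (intro DERIV_subset[OF bspec[OF U_deriv]]) auto
  moreover have "at x within {0<..<1} = at x"
    using assms by (intro at_within_open) auto
  ultimately show ?thesis
    by simp
qed

lemma U'_less:
  assumes "0 < a" "a < b" "b \<le> 1"
  shows "U' a < U' b"
proof (rule DERIV_pos_imp_increasing_open[OF \<open>a < b\<close>])
  show "continuous_on {a..b} U'"
    using assms by (intro continuous_on_subset[OF U'_continuous]) auto
  fix x assume "a < x" "x < b"
  then have "x \<in> {0<..<1}"
    using assms by auto
  then show "\<exists>y. DERIV U' x :> y \<and> y > 0"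
    using U'_deriv U''_pos by blast
qed

lemma continuous_on_reflected_sum: "continuous_on {0..1} (\<lambda>r. U r + U (1 - r))"
proof -
  have "continuous_on {0..1} (\<lambda>r. U (1 - r))"
    by (rule continuous_on_compose2[OF U_continuous]) (auto intro!: continuous_intros)
  then show ?thesis
    by (intro continuous_intros U_continuous)
qed

lemma reflected_sum_has_derivative:
  assumes "0 < x" "x < 1"
  shows "((\<lambda>r. U r + U (1 - r)) has_real_derivative U' x - U' (1 - x)) (at x)"
proof -
  have "((\<lambda>r. U (1 - r)) has_real_derivative U' (1 - x) * (-1)) (at x)"
    by (rule DERIV_chain2[OF U_has_derivative_at])
      (use assms in \<open>auto intro!: derivative_eq_intros\<close>)
  from DERIV_add[OF U_has_derivative_at[OF assms] this] show ?thesis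
    by simp
qed

lemma strict_mono_on_tilted_reflected_sum:
  assumes "0 < R" "R < 1"
  shows "strict_mono_on {0..R} (\<lambda>r. (U' R - U' (1 - R)) * r - U r - U (1 - r))"
proof (rule strict_mono_on_Icc_DERIV_pos)
  show "continuous_on {0..R} (\<lambda>r. (U' R - U' (1 - R)) * r - U r - U (1 - r))"
    using continuous_on_subset[OF continuous_on_reflected_sum, of "{0..R}"] assms
    by (auto simp: diff_diff_eq intro!: continuous_intros)
  fix x assume x: "0 < x" "x < R"
  have "((\<lambda>r. (U' R - U' (1 - R)) * r - (U r + U (1 - r))) has_real_derivative
      (U' R - U' (1 - R)) * 1 - (U' x - U' (1 - x))) (at x)"
    using x assms by (intro DERIV_diff DERIV_cmult DERIV_ident reflected_sum_has_derivative) auto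
  moreover have "U' x < U' R" "U' (1 - R) < U' (1 - x)"
    using x assms by (auto intro!: U'_less)
  ultimately show "\<exists>y. DERIV (\<lambda>r. (U' R - U' (1 - R)) * r - U r - U (1 - r)) x :> y \<and> y > 0"
    by (auto simp: diff_diff_eq)
qed

lemma reflected_sum_le_tangent:
  assumes U'_lim: "filterlim U' at_bot (at_right 0)"
    and r: "0 < r" "r < 1"
    and S: "\<And>\<rho>. 0 < \<rho> \<Longrightarrow> \<rho> < r \<Longrightarrow> U' (1 - \<rho>) + \<rho> * U'' \<rho> \<le> S"
  shows "- U r - U (1 - r) \<le> - U 0 - U 1 - r * U' r + r * S"
proof -
  define h where "h x = x * U' x - (U x + U (1 - x))" for x
  have h_deriv: "(h has_real_derivative U' (1 - x) + x * U'' x) (at x)"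
    if "0 < x" "x < 1" for x
  proof -
    have "(U' has_real_derivative U'' x) (at x)"
      using that U'_deriv by simp
    then have "(h has_real_derivative 1 * U' x + U'' x * x - (U' x - U' (1 - x))) (at x)"
      unfolding h_def using that
      by (intro DERIV_diff DERIV_mult DERIV_ident reflected_sum_has_derivative)
    then show ?thesis
      by (simp add: mult.commute add.commute)
  qed
  have h_bound: "h r \<le> - (U e + U (1 - e)) + (r - e) * S"
    if e: "0 < e" "e < r" "U' e \<le> 0" for e
  proof -
    have h_deriv_on: "(h has_real_derivative U' (1 - x) + x * U'' x) (at x)"
      if "e \<le> x" "x \<le> r" for x
      using h_deriv that r e by simp
    obtain z where z: "e < z" "z < r" "h r - h e = (r - e) * (U' (1 - z) + z * U'' z)"
      using MVT2[OF \<open>e < r\<close> h_deriv_on] by blast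
    then have "h r - h e \<le> (r - e) * S"
      using S[of z] e by (simp add: mult_left_mono)
    moreover have "e * U' e \<le> 0"
      using e by (simp add: mult_nonneg_nonpos)
    ultimately show ?thesis
      unfolding h_def by simp
  qed
  have "\<forall>\<^sub>F e in at_right 0. U' e \<le> 0"
    using U'_lim by (simp add: filterlim_at_bot)
  moreover have "\<forall>\<^sub>F e in at_right (0::real). 0 < e \<and> e < r"
    using r by (simp add: eventually_at_right_field) (metis)
  ultimately have ev: "\<forall>\<^sub>F e in at_right 0. h r \<le> - (U e + U (1 - e)) + (r - e) * S"
    by eventually_elim (use h_bound in auto)
  have sum_lim: "((\<lambda>e. U e + U (1 - e)) \<longlongrightarrow> U 0 + U (1 - 0)) (at_right 0)"
    by (rule continuous_on_Icc_at_rightD[OF continuous_on_reflected_sum]) simp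
  have lim: "((\<lambda>e. - (U e + U (1 - e)) + (r - e) * S) \<longlongrightarrow> - (U 0 + U (1 - 0)) + (r - 0) * S)
      (at_right 0)"
    by (rule tendsto_add[OF tendsto_minus[OF sum_lim]]) (intro tendsto_intros)
  have "h r \<le> - (U 0 + U (1 - 0)) + (r - 0) * S"
    by (rule tendsto_le[OF _ lim tendsto_const ev]) simp
  then show ?thesis
    unfolding h_def by simp
qed

lemma bdd_above_reflected_slope:
  assumes "mono_on {0<..<1} (\<lambda>r. r * U'' r)" "0 < R" "R < 1"
  shows "bdd_above ((\<lambda>\<rho>. U' (1 - \<rho>) + \<rho> * U'' \<rho>) ` {0<..R})"
proof (rule bdd_aboveI2)
  fix \<rho> assume \<rho>: "\<rho> \<in> {0<..R}"
  have "U' (1 - \<rho>) \<le> U' 1"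
    using U'_less[of "1 - \<rho>" 1] \<rho> assms by auto
  moreover have "\<rho> * U'' \<rho> \<le> R * U'' R"
    using mono_onD[OF assms(1), of \<rho> R] \<rho> assms by auto
  ultimately show "U' (1 - \<rho>) + \<rho> * U'' \<rho> \<le> U' 1 + R * U'' R"
    by simp
qed

end

theorem lemma3p3:
  fixes U U' U'' :: "real \<Rightarrow> real" and D R :: real
  assumes U_cont: "continuous_on {0..1} U"
    and U_deriv: "\<forall>x\<in>{0<..1}. (U has_real_derivative U' x) (at x within {0<..1})"
    and U'_cont: "continuous_on {0<..1} U'"
    and U'_deriv: "\<forall>x\<in>{0<..<1}. (U' has_real_derivative U'' x) (at x)"
    and U''_cont: "continuous_on {0<..<1} U''"
    and U''_pos: "\<forall>x\<in>{0<..<1}. U'' x > 0"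
    and U'_lim: "filterlim U' at_bot (at_right 0)"
    and mono: "mono_on {0<..<1} (\<lambda>r. r * U'' r)"
    and U0: "U 0 = 0" and U1: "U 1 = 0"
    and D_pos: "D > 0"
    and R_gt: "1/2 < R" and R_lt: "R < 1"
    and R_eq: "U' R - U' (1 - R) = D"
  shows "strict_mono_on {0..R} (\<lambda>r. D * r - U r - U (1 - r))
         \<and> (\<forall>r\<in>{0<..R}. - U r - U (1 - r)
               \<le> - r * U' r + r * (SUP \<rho>\<in>{0<..R}. U' (1 - \<rho>) + \<rho> * U'' \<rho>))"
proof -
  interpret strictly_convex_unit_potential U U' U''
    by unfold_locales (fact U_cont U_deriv U'_cont U'_deriv U''_pos)+
  have R_pos: "0 < R"
    using R_gt by simp
  have "strict_mono_on {0..R} (\<lambda>r. D * r - U r - U (1 - r))"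
    using strict_mono_on_tilted_reflected_sum[OF R_pos R_lt] R_eq by simp
  moreover have "- U r - U (1 - r)
      \<le> - r * U' r + r * (SUP \<rho>\<in>{0<..R}. U' (1 - \<rho>) + \<rho> * U'' \<rho>)" if r: "r \<in> {0<..R}" for r
    using reflected_sum_le_tangent[OF U'_lim, of r] r R_lt U0 U1
      cSUP_upper[OF _ bdd_above_reflected_slope[OF mono R_pos R_lt]]
    by simp
  ultimately show ?thesis
    by blast
qed

end
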